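(* Let $\mathcal{L}=(n,\mathcal{M},\mathcal{C})$ be a linearization and let $\mathcal{T}\subseteq\mathcal{P}$ be a subset of the proper monomials. A binary vector $y\in\{0,1\}^{\mathcal{S}\cup\mathcal{T}}$ can be extended to a vector $y'\in P(\mathcal{L})\cap\mathbb{Z}^{\mathcal{M}}$ if and only if $y_m=\prod_{i\in m}y_{\{i\}}$ holds for each $m\in\mathcal{T}$.
   Context: $[n]=\{1,\dots,n\}$; a monomial is a nonempty subset of $[n]$; $\mathcal{S}=\{\{i\}:i\in[n]\}$. A linearization is a triple $\mathcal{L}=(n,\mathcal{M},\mathcal{C})$, where $\mathcal{M}$ is a set of monomials with $\mathcal{S}\subseteq\mathcal{M}$ and $\mathcal{C}$ is a set of AND-constraints; each AND-constraint is a set $c\subseteq\mathcal{M}$ whose union $\bigcup c$ lies in $\mathcal{M}$. $\mathcal{P}=\mathcal{M}\setminus\mathcal{S}$. Linearizations are assumed consistent: for each $m\in\mathcal{P}$ there is $c\in\mathcal{C}$ with $\bigcup c=m$ and $|m'|<|m|$ for all $m'\in c$. $P(\mathcal{L})\subseteq\mathbb{R}^{\mathcal{M}}$ is the set of $y$ with $0\le y_m\le1$ for all $m\in\mathcal{M}$, $y_{\bigcup c}\le y_m$ for all $c\in\mathcal{C}$, $m\in c$, and $\sum_{m\in c}y_m\le y_{\bigcup c}+|c|-1$ for all $c\in\mathcal{C}$. *)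

theory Defs
  imports "HOL-Analysis.Analysis"
begin

text \<open>Monomials are nonempty subsets of [n] = {1..n}, represented as nat sets.
  A linearization is a triple (n, M, C) with M a set of monomials containing all
  singletons and C a set of AND-constraints.\<close>

definition singletons :: "nat \<Rightarrow> nat set set" where
  "singletons n = {{i} | i. i \<in> {1..n}}"

definition is_monomial :: "nat \<Rightarrow> nat set \<Rightarrow> bool" where
  "is_monomial n m \<longleftrightarrow> m \<noteq> {} \<and> m \<subseteq> {1..n}"

definition proper_monomials :: "nat \<Rightarrow> nat set set \<Rightarrow> nat set set" where
  "proper_monomials n M = M - singletons n"

text \<open>Linearization, including the standing consistency assumption.\<close>
definition linearization :: "nat \<Rightarrow> nat set set \<Rightarrow> nat set set set \<Rightarrow> bool" where
  "linearization n M C \<longleftrightarrow>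
     (\<forall>m\<in>M. is_monomial n m) \<and> singletons n \<subseteq> M \<and>
     (\<forall>c\<in>C. c \<subseteq> M \<and> \<Union>c \<in> M) \<and>
     (\<forall>m\<in>proper_monomials n M. \<exists>c\<in>C. \<Union>c = m \<and> (\<forall>m'\<in>c. card m' < card m))"

definition in_P :: "nat set set \<Rightarrow> nat set set set \<Rightarrow> (nat set \<Rightarrow> real) \<Rightarrow> bool" where
  "in_P M C y \<longleftrightarrow>
     (\<forall>m\<in>M. 0 \<le> y m \<and> y m \<le> 1) \<and>
     (\<forall>c\<in>C. \<forall>m\<in>c. y (\<Union>c) \<le> y m) \<and>
     (\<forall>c\<in>C. (\<Sum>m\<in>c. y m) \<le> y (\<Union>c) + real (card c) - 1)"

end

theory Submission
  imports Defs
begin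

text \<open>An integral point \<open>y\<close> of \<open>P(\<L>)\<close> is binary, and by induction on the degree it is
  multiplicative on all of \<open>\<M>\<close>: the AND-constraint \<open>c\<close> witnessing consistency of a proper
  monomial \<open>m\<close> consists of monomials of smaller degree; the bounds \<open>y m \<le> y m'\<close> force
  \<open>y m = 0\<close> as soon as one variable of \<open>m\<close> is 0, and the lower bound on \<open>y m\<close> forces
  \<open>y m = 1\<close> when all are 1. Conversely, if \<open>S\<close> is the set of variables set to 1, the
  vector \<open>[m \<subseteq> S]\<close> satisfies every AND-constraint and agrees with a binary assignment
  that is multiplicative on \<open>\<T>\<close>.\<close>

lemma prod_zero_one:
  fixes f :: "'a \<Rightarrow> 'b::comm_semiring_1"
  assumes "finite A" "\<forall>i\<in>A. f i \<in> {0, 1}"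
  shows "prod f A = (if \<forall>i\<in>A. f i = 1 then 1 else 0)"
  using assms by (auto intro: prod.neutral prod_zero)

lemma Ints_zero_one_cases:
  fixes x :: "'a::linordered_idom"
  assumes "x \<in> \<int>" "0 \<le> x" "x \<le> 1"
  shows "x = 0 \<or> x = 1"
proof -
  obtain k where x: "x = of_int k" using assms(1) Ints_cases by blast
  have "0 \<le> k" "k \<le> 1" using assms(2,3) unfolding x by simp_all
  then have "k = 0 \<or> k = 1" by linarith
  then show ?thesis unfolding x by auto
qed

lemma linearization_monomial_subset:
  assumes "linearization n M C" "m \<in> M"
  shows "m \<subseteq> {1..n}"
  using assms unfolding linearization_def is_monomial_def by simp

lemma linearization_constraint_subset:
  assumes "linearization n M C" "c \<in> C"
  shows "c \<subseteq> M"
  using assms unfolding linearization_def by simp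

lemma linearization_consistentE:
  assumes "linearization n M C" "m \<in> proper_monomials n M"
  obtains c where "c \<in> C" "\<Union>c = m" "\<forall>m'\<in>c. card m' < card m"
proof -
  have "\<forall>m\<in>proper_monomials n M. \<exists>c\<in>C. \<Union>c = m \<and> (\<forall>m'\<in>c. card m' < card m)"
    using assms(1) by (simp add: linearization_def)
  with assms(2) that show ?thesis by meson
qed

lemma linearization_finite:
  assumes "linearization n M C"
  shows "finite M"
proof (rule finite_subset)
  show "M \<subseteq> Pow {1..n}"
    using linearization_monomial_subset[OF assms] by blast
qed simp

lemma linearization_finite_monomial:
  assumes "linearization n M C" "m \<in> M"
  shows "finite m"
  using linearization_monomial_subset[OF assms] by (rule finite_subset) simp

lemma linearization_finite_constraint:
  assumes "linearization n M C" "c \<in> C"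
  shows "finite c"
  using linearization_constraint_subset[OF assms] linearization_finite[OF assms(1)]
  by (rule finite_subset)

lemma linearization_singleton_mem:
  assumes "linearization n M C" "m \<in> M" "i \<in> m"
  shows "{i} \<in> singletons n" "{i} \<in> M"
proof -
  show "{i} \<in> singletons n"
    using linearization_monomial_subset[OF assms(1,2)] assms(3) by (auto simp: singletons_def)
  then show "{i} \<in> M" using assms(1) unfolding linearization_def by blast
qed

lemma in_P_integral_binary:
  assumes "in_P M C y" "\<forall>m\<in>M. y m \<in> \<int>" "m \<in> M"
  shows "y m \<in> {0, 1}"
  using assms Ints_zero_one_cases[of "y m"] by (auto simp: in_P_def)

lemma in_P_constraint_eq_prod:
  assumes P: "in_P M C y" and c: "c \<in> C" "finite (\<Union>c)" "\<Union>c \<in> M"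
    and binary: "\<forall>i\<in>\<Union>c. y {i} \<in> {0, 1}"
    and mult: "\<And>m'. m' \<in> c \<Longrightarrow> y m' = (\<Prod>i\<in>m'. y {i})"
  shows "y (\<Union>c) = (\<Prod>i\<in>\<Union>c. y {i})"
proof -
  have upper: "y (\<Union>c) \<le> y m'" if "m' \<in> c" for m'
    using P c(1) that unfolding in_P_def by blast
  have lower: "(\<Sum>m'\<in>c. y m') \<le> y (\<Union>c) + real (card c) - 1"
    using P c(1) unfolding in_P_def by blast
  have bounds: "0 \<le> y (\<Union>c)" "y (\<Union>c) \<le> 1"
    using P c(3) unfolding in_P_def by blast+
  show ?thesis
  proof (cases "\<forall>i\<in>\<Union>c. y {i} = 1")
    case True
    have "y m' = 1" if "m' \<in> c" for m'
    proof -
      have "\<forall>i\<in>m'. y {i} = 1" using True that by blast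
      then show ?thesis unfolding mult[OF that] by (rule prod.neutral)
    qed
    then have "1 \<le> y (\<Union>c)" using lower by simp
    with bounds True show ?thesis by (simp add: prod.neutral)
  next
    case False
    then obtain i m' where i: "i \<in> m'" "m' \<in> c" "y {i} = 0" using binary by auto
    have "finite m'" using c(2) i(2) by (meson Sup_upper finite_subset)
    then have "y m' = 0" unfolding mult[OF i(2)] using i by (metis prod_zero)
    with upper[OF i(2)] bounds have "y (\<Union>c) = 0" by linarith
    with c(2) i show ?thesis by (metis UnionI prod_zero)
  qed
qed

lemma in_P_integral_eq_prod:
  assumes L: "linearization n M C" and P: "in_P M C y" and I: "\<forall>m\<in>M. y m \<in> \<int>"
    and "m \<in> M"
  shows "y m = (\<Prod>i\<in>m. y {i})"
  using \<open>m \<in> M\<close>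
proof (induction "card m" arbitrary: m rule: less_induct)
  case less
  show ?case
  proof (cases "m \<in> singletons n")
    case True
    then show ?thesis by (auto simp: singletons_def)
  next
    case False
    with less.prems have "m \<in> proper_monomials n M" by (simp add: proper_monomials_def)
    with L obtain c where c: "c \<in> C" "\<Union>c = m" "\<forall>m'\<in>c. card m' < card m"
      by (rule linearization_consistentE)
    have "y (\<Union>c) = (\<Prod>i\<in>\<Union>c. y {i})"
    proof (rule in_P_constraint_eq_prod[OF P c(1)])
      show "finite (\<Union>c)" using linearization_finite_monomial[OF L less.prems] c(2) by simp
      show "\<Union>c \<in> M" using less.prems c(2) by simp
      show "\<forall>i\<in>\<Union>c. y {i} \<in> {0, 1}"
        using in_P_integral_binary[OF P I] linearization_singleton_mem(2)[OF L less.prems] c(2)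
        by blast
      show "y m' = (\<Prod>i\<in>m'. y {i})" if "m' \<in> c" for m'
        using less.hyps c(3) linearization_constraint_subset[OF L c(1)] that by blast
    qed
    with c(2) show ?thesis by simp
  qed
qed

lemma in_P_subset_indicator:
  assumes "\<And>c. c \<in> C \<Longrightarrow> finite c"
  shows "in_P M C (\<lambda>m. if m \<subseteq> S then 1 else 0)"
  unfolding in_P_def
proof (intro conjI ballI)
  fix c assume c: "c \<in> C"
  show "(\<Sum>m\<in>c. if m \<subseteq> S then 1 else 0) \<le> (if \<Union>c \<subseteq> S then 1 else 0) + real (card c) - 1"
  proof (cases "\<Union>c \<subseteq> S")
    case True
    then have "(\<Sum>m\<in>c. if m \<subseteq> S then 1 else 0) = (\<Sum>m\<in>c. 1::real)"
      by (intro sum.cong) auto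
    with True show ?thesis by simp
  next
    case False
    then obtain m where m: "m \<in> c" "\<not> m \<subseteq> S" by auto
    have fin: "finite c" using assms c .
    have "(\<Sum>m\<in>c. if m \<subseteq> S then 1 else 0) = (\<Sum>m'\<in>c - {m}. if m' \<subseteq> S then 1 else (0::real))"
      using sum.remove[OF fin m(1), of "\<lambda>m. if m \<subseteq> S then 1 else (0::real)"] m(2) by simp
    also have "\<dots> \<le> (\<Sum>m'\<in>c - {m}. 1)" by (intro sum_mono) auto
    also have "\<dots> = real (card c) - 1"
    proof -
      have "card c \<ge> 1" using fin m(1) by (simp add: Suc_le_eq card_gt_0_iff) blast
      with fin m(1) show ?thesis by (simp add: card_Diff_singleton of_nat_diff)
    qed
    finally show ?thesis by simp
  qed
qed auto

lemma subset_indicator_eq_prod: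
  fixes y :: "nat set \<Rightarrow> 'a::comm_semiring_1"
  assumes "linearization n M C" "m \<in> M" "\<forall>m\<in>singletons n. y m \<in> {0, 1}"
  shows "(if m \<subseteq> {i. y {i} = 1} then 1 else 0) = (\<Prod>i\<in>m. y {i})"
proof -
  have "\<forall>i\<in>m. y {i} \<in> {0, 1}"
    using assms(3) linearization_singleton_mem(1)[OF assms(1,2)] by blast
  with linearization_finite_monomial[OF assms(1,2)]
  have "(\<Prod>i\<in>m. y {i}) = (if \<forall>i\<in>m. y {i} = 1 then 1 else 0)"
    by (rule prod_zero_one)
  then show ?thesis by (simp add: subset_eq)
qed

lemma binary_multiplicative_extends_to_integral_point:
  assumes L: "linearization n M C" and "T \<subseteq> M"
    and binary: "\<forall>m \<in> singletons n. y m \<in> {0, 1}"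
    and mult: "\<forall>m\<in>T. y m = (\<Prod>i\<in>m. y {i})"
  obtains y' where "in_P M C y'" "\<forall>m\<in>M. y' m \<in> \<int>" "\<forall>m \<in> singletons n \<union> T. y' m = y m"
proof
  define y' where "y' m = (if m \<subseteq> {i. y {i} = 1} then 1 else (0::real))" for m
  show "in_P M C y'"
    unfolding y'_def by (rule in_P_subset_indicator[OF linearization_finite_constraint[OF L]])
  show "\<forall>m\<in>M. y' m \<in> \<int>" by (simp add: y'_def)
  have "y' m = y m" if "m \<in> T" for m
  proof -
    have "y' m = (\<Prod>i\<in>m. y {i})"
      unfolding y'_def using L _ binary by (rule subset_indicator_eq_prod) (use that \<open>T \<subseteq> M\<close> in blast)
    with mult that show ?thesis by simp
  qed
  moreover have "y' m = y m" if "m \<in> singletons n" for m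
    using that binary by (auto simp: y'_def singletons_def)
  ultimately show "\<forall>m \<in> singletons n \<union> T. y' m = y m" by blast
qed

theorem proposition2p1:
  fixes n :: nat and M :: "nat set set" and C :: "nat set set set"
    and T :: "nat set set" and y :: "nat set \<Rightarrow> real"
  assumes "linearization n M C"
    and "T \<subseteq> proper_monomials n M"
    and "\<forall>m \<in> singletons n \<union> T. y m \<in> {0, 1}"
  shows "(\<exists>y'. in_P M C y' \<and> (\<forall>m\<in>M. y' m \<in> \<int>) \<and>
              (\<forall>m \<in> singletons n \<union> T. y' m = y m))
         \<longleftrightarrow> (\<forall>m\<in>T. y m = (\<Prod>i\<in>m. y {i}))"
proof -
  have TM: "T \<subseteq> M" using assms(2) by (auto simp: proper_monomials_def)
  show ?thesis
  proof
    assume "\<exists>y'. in_P M C y' \<and> (\<forall>m\<in>M. y' m \<in> \<int>) \<and> (\<forall>m \<in> singletons n \<union> T. y' m = y m)"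
    then obtain y' where P: "in_P M C y'" "\<forall>m\<in>M. y' m \<in> \<int>"
      and agree: "\<forall>m \<in> singletons n \<union> T. y' m = y m" by blast
    show "\<forall>m\<in>T. y m = (\<Prod>i\<in>m. y {i})"
    proof
      fix m assume "m \<in> T"
      then have mM: "m \<in> M" using TM by blast
      have "y m = y' m" using agree \<open>m \<in> T\<close> by simp
      also have "y' m = (\<Prod>i\<in>m. y' {i})" by (rule in_P_integral_eq_prod[OF assms(1) P mM])
      also have "\<dots> = (\<Prod>i\<in>m. y {i})"
        using agree linearization_singleton_mem(1)[OF assms(1) mM] by (intro prod.cong) auto
      finally show "y m = (\<Prod>i\<in>m. y {i})" .
    qed
  next
    assume "\<forall>m\<in>T. y m = (\<Prod>i\<in>m. y {i})"
    with assms(1) TM assms(3) show "\<exists>y'. in_P M C y' \<and> (\<forall>m\<in>M. y' m \<in> \<int>) \<and> (\<forall>m \<in> singletons n \<union> T. y' m = y m)"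
      by (elim binary_multiplicative_extends_to_integral_point) auto
  qed
qed

end
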